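(* Let $(a_0,\ldots,a_n)$ be a finite sequence of positive integers and $\omega=[a_0,\ldots,a_n,1,1,1,\ldots]$. For every $\varepsilon>0$ there is $m_0>0$ such that for every integer $m\ge m_0$ and every infinite sequence of positive integers $I=(a_{n+m},a_{n+m+1},\ldots)$, writing $$\beta^I=[a_0,\ldots,a_n,\underbrace{1,\ldots,1}_{m-1},a_{n+m},a_{n+m+1},\ldots]$$ (digits $a_0,\ldots,a_n$ in positions $0,\ldots,n$, ones in positions $n+1,\ldots,n+m-1$, and $a_j$ in position $j\ge n+m$), we have $$\sum_{i\ge n+m}\alpha_0(\omega)\cdots\alpha_{i-1}(\omega)\log\frac{1}{\alpha_i(\omega)}<\varepsilon$$ and $$\sum_{i=0}^{n+m-1}\left|\alpha_0(\beta^I)\cdots\alpha_{i-1}(\beta^I)\log\frac{1}{\alpha_i(\beta^I)}-\alpha_0(\omega)\cdots\alpha_{i-1}(\omega)\log\frac{1}{\alpha_i(\omega)}\right|<\varepsilon.$$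
   Context: For positive integers $d_0,d_1,\ldots$, $[d_0,d_1,d_2,\ldots]$ denotes the continued fraction $\cfrac{1}{d_0+\cfrac{1}{d_1+\cfrac{1}{d_2+\cdots}}}$, and for $\beta=[d_0,d_1,\ldots]$ we write $\alpha_j(\beta)=[d_j,d_{j+1},\ldots]$. (An empty product equals $1$.) *)

theory Defs
  imports "HOL-Analysis.Analysis"
begin

fun cf_trunc :: "(nat \<Rightarrow> nat) \<Rightarrow> nat \<Rightarrow> real" where
  "cf_trunc d 0 = 0"
| "cf_trunc d (Suc N) = 1 / (real (d 0) + cf_trunc (\<lambda>k. d (Suc k)) N)"

definition cf :: "(nat \<Rightarrow> nat) \<Rightarrow> real" where
  "cf d = lim (\<lambda>N. cf_trunc d N)"

definition cf_alpha :: "nat \<Rightarrow> (nat \<Rightarrow> nat) \<Rightarrow> real" where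
  "cf_alpha j d = cf (\<lambda>k. d (j + k))"

definition cf_term :: "(nat \<Rightarrow> nat) \<Rightarrow> nat \<Rightarrow> real" where
  "cf_term d i = (\<Prod>j<i. cf_alpha j d) * ln (1 / cf_alpha i d)"

end

theory Submission
  imports Defs
begin

(* Every alpha_j lies in (0,1], and alpha_j <= 2/3 as soon as the digits in positions j and j+1
   are both 1; so along a block of ones the products alpha_0 ... alpha_(i-1) decay like (2/3)^i,
   and a term whose digit is 1 is at most its product, because log (1/alpha) <= 1/alpha - 1 <= 1.
   This bounds the tail of omega, and for beta and omega alike every term with index between a
   cut-off K and N = n + m.  Below K, beta and omega share all digits before N, and unrolling
   alpha_j = 1/(d_j + alpha_(j+1)) gives |alpha_j beta - alpha_j omega| <= alpha_j omega ...
   alpha_(N-1) omega <= (2/3)^(N-K).  Since every alpha_i with i < N is at least 1/(A+1), A bounding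
   the digits, log is Lipschitz there and the first K terms differ by O(K^2 (2/3)^(N-K)).
   Fixing K first and then taking m large makes both contributions small. *)

lemma cf_trunc_nonneg_le_1:
  assumes "\<forall>k. d k > 0"
  shows "0 \<le> cf_trunc d N \<and> cf_trunc d N \<le> 1"
  using assms
proof (induction N arbitrary: d)
  case 0
  then show ?case by simp
next
  case (Suc N)
  then have "0 \<le> cf_trunc (\<lambda>k. d (Suc k)) N" by auto
  moreover have "1 \<le> real (d 0)" using Suc.prems by (simp add: Suc_le_eq)
  ultimately show ?case by (simp add: divide_le_eq)
qed

(* A single level x \<mapsto> 1/(a + x) need not contract (a = 1, x near 0), but two levels contract
   by a factor 4. *)
lemma two_level_fraction_dist_le:
  fixes a b x y :: real
  assumes "1 \<le> a" "1 \<le> b" "0 \<le> x" "0 \<le> y"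
  shows "\<bar>1 / (a + 1 / (b + x)) - 1 / (a + 1 / (b + y))\<bar> \<le> \<bar>x - y\<bar> / 4"
proof -
  have "1 * 1 \<le> a * (b + x)" "1 * 1 \<le> a * (b + y)"
    using assms by (intro mult_mono; simp)+
  then have px: "2 \<le> a * (b + x) + 1" and py: "2 \<le> a * (b + y) + 1" by simp_all
  have "1 / (a + 1 / (b + x)) - 1 / (a + 1 / (b + y))
      = (b + x) / (a * (b + x) + 1) - (b + y) / (a * (b + y) + 1)"
    using assms by (simp add: field_simps)
  also have "\<dots> = (x - y) / ((a * (b + x) + 1) * (a * (b + y) + 1))"
    using px py by (simp add: diff_frac_eq algebra_simps)
  finally have eq: "1 / (a + 1 / (b + x)) - 1 / (a + 1 / (b + y))
      = (x - y) / ((a * (b + x) + 1) * (a * (b + y) + 1))" .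
  have "2 * 2 \<le> (a * (b + x) + 1) * (a * (b + y) + 1)"
    using px py by (intro mult_mono) auto
  then show ?thesis
    unfolding eq abs_divide using px py by (intro divide_left_mono) (auto simp: abs_mult)
qed

lemma cf_trunc_dist_le:
  assumes "\<forall>k. d k > 0" "2 * L \<le> N" "2 * L \<le> M"
  shows "\<bar>cf_trunc d N - cf_trunc d M\<bar> \<le> (1/4) ^ L"
  using assms
proof (induction L arbitrary: d N M)
  case 0
  then show ?case
    using cf_trunc_nonneg_le_1[OF 0(1), of N] cf_trunc_nonneg_le_1[OF 0(1), of M] by (simp add: abs_le_iff)
next
  case (Suc L)
  define N' M' where "N' = N - 2" and "M' = M - 2"
  have N: "N = Suc (Suc N')" and M: "M = Suc (Suc M')"
    using Suc.prems(2,3) by (simp_all add: N'_def M'_def)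
  define e where "e = (\<lambda>k. d (Suc (Suc k)))"
  have e_pos: "\<forall>k. e k > 0" using Suc.prems(1) by (simp add: e_def)
  have digits: "1 \<le> real (d 0)" "1 \<le> real (d 1)" using Suc.prems(1) by (simp_all add: Suc_le_eq)
  have "\<bar>cf_trunc d N - cf_trunc d M\<bar> \<le> \<bar>cf_trunc e N' - cf_trunc e M'\<bar> / 4"
    unfolding N M e_def
    using two_level_fraction_dist_le[OF digits] cf_trunc_nonneg_le_1[OF e_pos[unfolded e_def]]
    by simp
  also have "\<dots> \<le> (1/4) ^ L / 4"
    using Suc.IH[OF e_pos] Suc.prems(2,3) N M by simp
  finally show ?case by simp
qed

lemma cf_trunc_tendsto:
  assumes "\<forall>k. d k > 0"
  shows "(\<lambda>N. cf_trunc d N) \<longlonglongrightarrow> cf d"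
proof -
  have "Cauchy (\<lambda>N. cf_trunc d N)"
  proof (rule CauchyI)
    fix \<epsilon> :: real
    assume "\<epsilon> > 0"
    then obtain L where L: "(1/4 :: real) ^ L < \<epsilon>"
      using real_arch_pow_inv[of \<epsilon> "1/4"] by auto
    have "norm (cf_trunc d N - cf_trunc d M) < \<epsilon>" if "2 * L \<le> N" "2 * L \<le> M" for N M
      using cf_trunc_dist_le[OF assms that] L by simp
    then show "\<exists>K. \<forall>N\<ge>K. \<forall>M\<ge>K. norm (cf_trunc d N - cf_trunc d M) < \<epsilon>"
      by blast
  qed
  then show ?thesis
    unfolding cf_def by (simp add: Cauchy_convergent_iff convergent_LIMSEQ_iff)
qed

lemma cf_nonneg_le_1:
  assumes "\<forall>k. d k > 0"
  shows "0 \<le> cf d \<and> cf d \<le> 1"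
  using LIMSEQ_le_const[OF cf_trunc_tendsto[OF assms]] LIMSEQ_le_const2[OF cf_trunc_tendsto[OF assms]]
    cf_trunc_nonneg_le_1[OF assms] by blast

lemma cf_unfold:
  assumes "\<forall>k. d k > 0"
  shows "cf d = 1 / (real (d 0) + cf (\<lambda>k. d (Suc k)))"
proof -
  have shift_pos: "\<forall>k. d (Suc k) > 0" using assms by simp
  have "1 \<le> real (d 0)" using assms by (simp add: Suc_le_eq)
  have "(\<lambda>N. cf_trunc d (Suc N)) \<longlonglongrightarrow> 1 / (real (d 0) + cf (\<lambda>k. d (Suc k)))"
    using cf_trunc_tendsto[OF shift_pos] cf_nonneg_le_1[OF shift_pos] \<open>1 \<le> real (d 0)\<close>
    by (auto intro!: tendsto_intros)
  then show ?thesis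
    using LIMSEQ_unique[OF LIMSEQ_Suc[OF cf_trunc_tendsto[OF assms]]] by simp
qed

lemma cf_alpha_unfold:
  assumes "\<forall>k. d k > 0"
  shows "cf_alpha j d = 1 / (real (d j) + cf_alpha (Suc j) d)"
  using cf_unfold[of "\<lambda>k. d (j + k)"] assms unfolding cf_alpha_def by simp

lemma cf_alpha_bounds:
  assumes "\<forall>k. d k > 0"
  shows "1 / (real (d j) + 1) \<le> cf_alpha j d \<and> cf_alpha j d \<le> 1 \<and> 0 < cf_alpha j d"
proof -
  have "0 \<le> cf_alpha (Suc j) d \<and> cf_alpha (Suc j) d \<le> 1"
    using cf_nonneg_le_1[of "\<lambda>k. d (Suc j + k)"] assms unfolding cf_alpha_def by simp
  moreover have "1 \<le> real (d j)" using assms by (simp add: Suc_le_eq)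
  ultimately show ?thesis
    unfolding cf_alpha_unfold[OF assms, of j] by (auto simp: frac_le divide_le_eq)
qed

lemma cf_alpha_pos: "\<forall>k. d k > 0 \<Longrightarrow> 0 < cf_alpha j d"
  using cf_alpha_bounds by blast

lemma cf_alpha_le_1: "\<forall>k. d k > 0 \<Longrightarrow> cf_alpha j d \<le> 1"
  using cf_alpha_bounds by blast

lemma cf_alpha_le_two_thirds:
  assumes "\<forall>k. d k > 0" "d j = 1" "d (Suc j) = 1"
  shows "cf_alpha j d \<le> 2/3"
proof -
  have "1/2 \<le> cf_alpha (Suc j) d" using cf_alpha_bounds[OF assms(1), of "Suc j"] assms(3) by simp
  then show ?thesis unfolding cf_alpha_unfold[OF assms(1), of j] using assms(2) by (simp add: divide_le_eq)
qed

lemma cf_alpha_dist_le_step: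
  assumes d: "\<forall>k. d k > 0" and e: "\<forall>k. e k > 0" and "d j = e j"
  shows "\<bar>cf_alpha j d - cf_alpha j e\<bar>
    \<le> cf_alpha j e * \<bar>cf_alpha (Suc j) d - cf_alpha (Suc j) e\<bar>"
proof -
  define x y where "x = cf_alpha (Suc j) d" and "y = cf_alpha (Suc j) e"
  have "0 < real (e j) + x" "0 < real (e j) + y"
    using cf_alpha_bounds[OF d, of "Suc j"] cf_alpha_bounds[OF e, of "Suc j"] e
    by (auto simp: x_def y_def add_pos_nonneg)
  then have "1 / (real (e j) + x) - 1 / (real (e j) + y)
      = (y - x) * (1 / (real (e j) + x)) * (1 / (real (e j) + y))"
    by (simp add: field_simps)
  moreover have "cf_alpha j d = 1 / (real (e j) + x)" "cf_alpha j e = 1 / (real (e j) + y)"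
    using cf_alpha_unfold[OF d, of j] cf_alpha_unfold[OF e, of j] \<open>d j = e j\<close> by (simp_all add: x_def y_def)
  ultimately have "cf_alpha j d - cf_alpha j e = (y - x) * cf_alpha j d * cf_alpha j e"
    by simp
  then have "\<bar>cf_alpha j d - cf_alpha j e\<bar> = cf_alpha j d * (cf_alpha j e * \<bar>x - y\<bar>)"
    using cf_alpha_bounds[OF d, of j] cf_alpha_bounds[OF e, of j] by (simp add: abs_mult abs_minus_commute)
  also have "\<dots> \<le> cf_alpha j e * \<bar>x - y\<bar>"
    using cf_alpha_bounds[OF d, of j] cf_alpha_bounds[OF e, of j] by (intro mult_left_le_one_le) auto
  finally show ?thesis by (simp add: x_def y_def)
qed

lemma cf_alpha_dist_le_prod:
  assumes d: "\<forall>k. d k > 0" and e: "\<forall>k. e k > 0" and "\<forall>k\<in>{j..<N}. d k = e k"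
  shows "\<bar>cf_alpha j d - cf_alpha j e\<bar> \<le> (\<Prod>k\<in>{j..<N}. cf_alpha k e)"
  using assms(3)
proof (induction "N - j" arbitrary: j)
  case 0
  then show ?case
    using cf_alpha_bounds[OF d, of j] cf_alpha_bounds[OF e, of j] by (simp add: abs_le_iff)
next
  case (Suc t)
  then have "j < N" by simp
  have "\<bar>cf_alpha j d - cf_alpha j e\<bar>
      \<le> cf_alpha j e * \<bar>cf_alpha (Suc j) d - cf_alpha (Suc j) e\<bar>"
    using Suc.prems \<open>j < N\<close> by (intro cf_alpha_dist_le_step[OF d e]) simp
  also have "\<dots> \<le> cf_alpha j e * (\<Prod>k\<in>{Suc j..<N}. cf_alpha k e)"
    using Suc cf_alpha_bounds[OF e, of j] by (intro mult_left_mono) auto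
  also have "\<dots> = (\<Prod>k\<in>{j..<N}. cf_alpha k e)"
    using \<open>j < N\<close> by (simp add: prod.atLeast_Suc_lessThan)
  finally show ?case .
qed

lemma prod_le_power_card:
  fixes f :: "'a \<Rightarrow> real"
  assumes "finite S" "T \<subseteq> S" "\<forall>x\<in>S. 0 \<le> f x \<and> f x \<le> 1" "\<forall>x\<in>T. f x \<le> r"
  shows "prod f S \<le> r ^ card T"
proof -
  have "prod f S = prod f T * prod f (S - T)"
    using assms(1,2) by (simp add: prod.subset_diff)
  also have "\<dots> \<le> r ^ card T * 1"
  proof (rule mult_mono)
    show "prod f T \<le> r ^ card T"
      using prod_mono[of T f "\<lambda>_. r"] assms(2-4) by auto
    show "prod f (S - T) \<le> 1" "0 \<le> prod f (S - T)"
      using assms(3) by (auto intro: prod_le_1 prod_nonneg)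
    show "0 \<le> r ^ card T"
      using \<open>prod f T \<le> r ^ card T\<close> prod_nonneg[of T f] assms(2,3) by force
  qed
  finally show ?thesis by simp
qed

lemma prod_cf_alpha_le_geometric:
  assumes pos: "\<forall>k. d k > 0" and ones: "\<forall>k. n < k \<and> k \<le> i \<longrightarrow> d k = 1"
  shows "(\<Prod>j<i. cf_alpha j d) \<le> (2/3) ^ (i - Suc n)"
proof -
  have "(\<Prod>j<i. cf_alpha j d) \<le> (2/3) ^ card {Suc n..<i}"
  proof (rule prod_le_power_card)
    show "\<forall>j\<in>{..<i}. 0 \<le> cf_alpha j d \<and> cf_alpha j d \<le> 1"
      using cf_alpha_bounds[OF pos] by (simp add: less_imp_le)
    show "\<forall>j\<in>{Suc n..<i}. cf_alpha j d \<le> 2/3"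
    proof
      fix j assume "j \<in> {Suc n..<i}"
      then show "cf_alpha j d \<le> 2/3"
        using ones by (intro cf_alpha_le_two_thirds[OF pos]) auto
    qed
  qed auto
  then show ?thesis by simp
qed

lemma cf_term_abs_le_prod:
  assumes pos: "\<forall>k. d k > 0" and "d i = 1"
  shows "\<bar>cf_term d i\<bar> \<le> (\<Prod>j<i. cf_alpha j d)"
proof -
  have \<alpha>: "1/2 \<le> cf_alpha i d" "cf_alpha i d \<le> 1"
    using cf_alpha_bounds[OF pos, of i] assms(2) by auto
  have "ln (1 / cf_alpha i d) \<le> 1 / cf_alpha i d - 1"
    using \<alpha> by (intro ln_le_minus_one) auto
  also have "\<dots> \<le> 1" using \<alpha> by (simp add: divide_le_eq)
  finally have "\<bar>ln (1 / cf_alpha i d)\<bar> \<le> 1" using \<alpha> by simp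
  moreover have "0 \<le> (\<Prod>j<i. cf_alpha j d)"
    using cf_alpha_bounds[OF pos] by (simp add: prod_nonneg less_imp_le)
  ultimately show ?thesis
    unfolding cf_term_def abs_mult by (simp add: mult_left_le)
qed

lemma cf_term_abs_le_geometric:
  assumes "\<forall>k. d k > 0" "\<forall>k. n < k \<and> k \<le> i \<longrightarrow> d k = 1" "n < i"
  shows "\<bar>cf_term d i\<bar> \<le> (2/3) ^ (i - Suc n)"
proof -
  have "d i = 1" using assms(2,3) by simp
  with assms(1,2) show ?thesis
    using cf_term_abs_le_prod prod_cf_alpha_le_geometric order_trans by blast
qed

lemma ln_dist_le:
  fixes c x y :: real
  assumes "0 < c" "c \<le> x" "c \<le> y"
  shows "\<bar>ln x - ln y\<bar> \<le> \<bar>x - y\<bar> / c"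
proof -
  have "ln u - ln v \<le> \<bar>u - v\<bar> / c" if "c \<le> u" "c \<le> v" for u v
  proof -
    have "ln u - ln v = ln (u / v)" using that assms by (simp add: ln_div)
    also have "\<dots> \<le> u / v - 1" using that assms by (intro ln_le_minus_one) auto
    also have "\<dots> = (u - v) / v" using that assms by (simp add: field_simps)
    also have "\<dots> \<le> \<bar>u - v\<bar> / c"
      using that assms by (intro frac_le) auto
    finally show ?thesis .
  qed
  from this[of x y] this[of y x] assms show ?thesis by (auto simp: abs_minus_commute)
qed

lemma mult_ln_inverse_dist_le:
  fixes p q x y c :: real
  assumes "0 \<le> q" "q \<le> 1" "0 < c" "c \<le> x" "x \<le> 1" "c \<le> y"
  shows "\<bar>p * ln (1/x) - q * ln (1/y)\<bar> \<le> (\<bar>p - q\<bar> + \<bar>x - y\<bar>) / c"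
proof -
  have "0 < x" "0 < y" using assms by auto
  have ln_x: "0 \<le> ln (1/x)" "ln (1/x) \<le> 1/c"
  proof -
    show "0 \<le> ln (1/x)" using assms \<open>0 < x\<close> by simp
    have "ln (1/x) \<le> 1/x - 1" using \<open>0 < x\<close> by (intro ln_le_minus_one) auto
    also have "\<dots> \<le> 1/c" using assms frac_le[of 1 1 c x] by simp
    finally show "ln (1/x) \<le> 1/c" .
  qed
  have "\<bar>p * ln (1/x) - q * ln (1/y)\<bar> = \<bar>(p - q) * ln (1/x) + q * (ln y - ln x)\<bar>"
    using \<open>0 < x\<close> \<open>0 < y\<close> by (simp add: ln_div algebra_simps)
  also have "\<dots> \<le> \<bar>(p - q) * ln (1/x)\<bar> + \<bar>q * (ln y - ln x)\<bar>"
    by (rule abs_triangle_ineq)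
  also have "\<dots> = \<bar>p - q\<bar> * ln (1/x) + q * \<bar>ln x - ln y\<bar>"
    using ln_x assms(1) by (simp add: abs_mult abs_minus_commute)
  also have "\<dots> \<le> \<bar>p - q\<bar> * (1/c) + 1 * (\<bar>x - y\<bar> / c)"
    using ln_x assms ln_dist_le[of c x y] by (intro add_mono mult_mono) auto
  finally show ?thesis by (simp add: add_divide_distrib)
qed

lemma sum_atLeastLessThan_power_le:
  fixes r :: real
  assumes "0 \<le> r" "r < 1" "c \<le> K"
  shows "(\<Sum>i\<in>{K..<N}. r ^ (i - c)) \<le> r ^ (K - c) / (1 - r)"
proof (cases "K \<le> N")
  case True
  have "(\<Sum>i\<in>{K..<N}. r ^ (i - c)) = (\<Sum>i<N - K. r ^ (K - c) * r ^ i)"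
    using True assms(3)
    by (intro sum.reindex_bij_witness[of _ "\<lambda>i. i + K" "\<lambda>i. i - K"]) (auto simp: power_add [symmetric])
  also have "\<dots> = r ^ (K - c) * ((1 - r ^ (N - K)) / (1 - r))"
    using assms by (simp add: sum_distrib_left [symmetric] sum_gp_strict)
  also have "\<dots> \<le> r ^ (K - c) * (1 / (1 - r))"
    using assms by (intro mult_left_mono divide_right_mono) auto
  finally show ?thesis by simp
qed (use assms in simp)

lemma cf_term_abs_sum_le:
  assumes pos: "\<forall>k. d k > 0" and ones: "\<forall>k. n < k \<and> k < N \<longrightarrow> d k = 1" and "n < K"
  shows "(\<Sum>i\<in>{K..<N}. \<bar>cf_term d i\<bar>) \<le> 3 * (2/3) ^ (K - Suc n)"
proof -
  have "(\<Sum>i\<in>{K..<N}. \<bar>cf_term d i\<bar>) \<le> (\<Sum>i\<in>{K..<N}. (2/3) ^ (i - Suc n))"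
    using ones \<open>n < K\<close> by (intro sum_mono cf_term_abs_le_geometric[OF pos]) auto
  also have "\<dots> \<le> (2/3) ^ (K - Suc n) / (1 - 2/3)"
    using \<open>n < K\<close> by (intro sum_atLeastLessThan_power_le) auto
  finally show ?thesis by simp
qed

lemma cf_term_tail_le:
  assumes pos: "\<forall>k. d k > 0" and ones: "\<forall>k>n. d k = 1" and "n < N"
  shows "summable (\<lambda>k. cf_term d (N + k))"
    and "(\<Sum>k. cf_term d (N + k)) \<le> 3 * (2/3) ^ (N - Suc n)"
proof -
  define g :: "nat \<Rightarrow> real" where "g k = (2/3) ^ (N - Suc n) * (2/3) ^ k" for k
  have bound: "\<bar>cf_term d (N + k)\<bar> \<le> g k" for k
  proof -
    have "N + k - Suc n = (N - Suc n) + k" using \<open>n < N\<close> by simp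
    then have "g k = (2/3) ^ (N + k - Suc n)" by (simp add: g_def power_add)
    then show ?thesis
      using cf_term_abs_le_geometric[OF pos, of n "N + k"] ones \<open>n < N\<close> by simp
  qed
  have g_sums: "g sums ((2/3) ^ (N - Suc n) * 3)"
    unfolding g_def using sums_mult[OF geometric_sums[of "2/3 :: real"]] by simp
  then have "summable g" by (rule sums_summable)
  show summable: "summable (\<lambda>k. cf_term d (N + k))"
    by (rule summable_comparison_test'[OF \<open>summable g\<close>]) (simp add: bound)
  have "(\<Sum>k. cf_term d (N + k)) \<le> (\<Sum>k. g k)"
    using bound abs_le_D1 by (intro suminf_le summable \<open>summable g\<close>) blast
  then show "(\<Sum>k. cf_term d (N + k)) \<le> 3 * (2/3) ^ (N - Suc n)"
    using g_sums by (simp add: sums_iff)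
qed

lemma cf_alpha_dist_le_power:
  assumes d: "\<forall>k. d k > 0" and e: "\<forall>k. e k > 0"
    and agree: "\<forall>k<N. d k = e k" and ones: "\<forall>k>n. e k = 1"
    and "n < K" "j \<le> K" "K \<le> N"
  shows "\<bar>cf_alpha j d - cf_alpha j e\<bar> \<le> (2/3) ^ (N - K)"
proof -
  have "\<bar>cf_alpha j d - cf_alpha j e\<bar> \<le> (\<Prod>k\<in>{j..<N}. cf_alpha k e)"
    using agree by (intro cf_alpha_dist_le_prod[OF d e]) auto
  also have "\<dots> \<le> (2/3) ^ card {K..<N}"
  proof (rule prod_le_power_card)
    show "\<forall>k\<in>{j..<N}. 0 \<le> cf_alpha k e \<and> cf_alpha k e \<le> 1"
      using cf_alpha_bounds[OF e] by (simp add: less_imp_le)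
    show "\<forall>k\<in>{K..<N}. cf_alpha k e \<le> 2/3"
    proof
      fix k assume "k \<in> {K..<N}"
      then show "cf_alpha k e \<le> 2/3"
        using ones \<open>n < K\<close> by (intro cf_alpha_le_two_thirds[OF e]) auto
    qed
  qed (use \<open>j \<le> K\<close> in auto)
  finally show ?thesis by simp
qed

lemma cf_term_dist_le:
  assumes d: "\<forall>k. d k > 0" and e: "\<forall>k. e k > 0" and "0 < c"
    and lower: "c \<le> cf_alpha i d" "c \<le> cf_alpha i e"
    and close: "\<forall>j\<le>i. \<bar>cf_alpha j d - cf_alpha j e\<bar> \<le> \<delta>"
  shows "\<bar>cf_term d i - cf_term e i\<bar> \<le> (real i + 1) * \<delta> / c"
proof -
  have "norm ((\<Prod>j<i. cf_alpha j d) - (\<Prod>j<i. cf_alpha j e))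
      \<le> (\<Sum>j<i. norm (cf_alpha j d - cf_alpha j e))"
    by (intro norm_prod_diff) (simp_all add: abs_of_pos cf_alpha_pos cf_alpha_le_1 d e)
  also have "\<dots> \<le> i * \<delta>"
    using close sum_bounded_above[of "{..<i}" _ \<delta>] by simp
  finally have prod_close: "\<bar>(\<Prod>j<i. cf_alpha j d) - (\<Prod>j<i. cf_alpha j e)\<bar> \<le> i * \<delta>"
    by simp
  have "\<bar>cf_term d i - cf_term e i\<bar>
      \<le> (\<bar>(\<Prod>j<i. cf_alpha j d) - (\<Prod>j<i. cf_alpha j e)\<bar> + \<bar>cf_alpha i d - cf_alpha i e\<bar>) / c"
    unfolding cf_term_def
  proof (rule mult_ln_inverse_dist_le)
    show "0 \<le> (\<Prod>j<i. cf_alpha j e)" "(\<Prod>j<i. cf_alpha j e) \<le> 1"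
      using cf_alpha_bounds[OF e] by (auto intro: prod_nonneg prod_le_1 less_imp_le)
  qed (use lower \<open>0 < c\<close> cf_alpha_le_1[OF d] in auto)
  also have "\<dots> \<le> (i * \<delta> + \<delta>) / c"
    using prod_close close \<open>0 < c\<close> by (intro divide_right_mono add_mono) auto
  finally show ?thesis by (simp add: algebra_simps)
qed

lemma cf_term_dist_sum_head_le:
  assumes d: "\<forall>k. d k > 0" and e: "\<forall>k. e k > 0"
    and agree: "\<forall>k<N. d k = e k" and ones: "\<forall>k>n. e k = 1"
    and digits: "\<forall>k. real (e k) \<le> A" and "n < K" "K \<le> N"
  shows "(\<Sum>i<K. \<bar>cf_term d i - cf_term e i\<bar>) \<le> (A + 1) * K ^ 2 * (2/3) ^ (N - K)"
proof -
  define \<delta> :: real where "\<delta> = (2/3) ^ (N - K)"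
  have "1 \<le> real (e 0)" using e by (simp add: Suc_le_eq)
  then have "1 \<le> A" using digits by (meson order_trans)
  have term_close: "\<bar>cf_term d i - cf_term e i\<bar> \<le> (A + 1) * K * \<delta>" if "i < K" for i
  proof -
    have "1 / (A + 1) \<le> 1 / (real (e i) + 1)"
      using digits \<open>1 \<le> A\<close> by (intro divide_left_mono) auto
    then have "1 / (A + 1) \<le> cf_alpha i d" "1 / (A + 1) \<le> cf_alpha i e"
      using cf_alpha_bounds[OF d, of i] cf_alpha_bounds[OF e, of i] agree that \<open>K \<le> N\<close> by auto
    then have "\<bar>cf_term d i - cf_term e i\<bar> \<le> (real i + 1) * \<delta> / (1 / (A + 1))"
      using that \<open>1 \<le> A\<close> cf_alpha_dist_le_power[OF d e agree ones \<open>n < K\<close> _ \<open>K \<le> N\<close>]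
      by (intro cf_term_dist_le[OF d e]) (auto simp: \<delta>_def)
    also have "\<dots> \<le> (A + 1) * K * \<delta>"
      using that \<open>1 \<le> A\<close> by (simp add: \<delta>_def mult_right_mono)
    finally show ?thesis .
  qed
  have "(\<Sum>i<K. \<bar>cf_term d i - cf_term e i\<bar>) \<le> (\<Sum>i<K. (A + 1) * K * \<delta>)"
    using term_close by (intro sum_mono) simp
  then show ?thesis by (simp add: \<delta>_def power2_eq_square algebra_simps)
qed

lemma cf_term_dist_sum_le:
  assumes d: "\<forall>k. d k > 0" and e: "\<forall>k. e k > 0"
    and agree: "\<forall>k<N. d k = e k" and ones: "\<forall>k>n. e k = 1"
    and digits: "\<forall>k. real (e k) \<le> A" and "n < K" "K \<le> N"
  shows "(\<Sum>i<N. \<bar>cf_term d i - cf_term e i\<bar>)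
    \<le> (A + 1) * K ^ 2 * (2/3) ^ (N - K) + 6 * (2/3) ^ (K - Suc n)"
proof -
  have "{..<N} = {..<K} \<union> {K..<N}" "{..<K} \<inter> {K..<N} = {}" using \<open>K \<le> N\<close> by auto
  then have "(\<Sum>i<N. \<bar>cf_term d i - cf_term e i\<bar>)
      = (\<Sum>i<K. \<bar>cf_term d i - cf_term e i\<bar>) + (\<Sum>i\<in>{K..<N}. \<bar>cf_term d i - cf_term e i\<bar>)"
    by (simp add: sum.union_disjoint)
  also have "(\<Sum>i\<in>{K..<N}. \<bar>cf_term d i - cf_term e i\<bar>)
      \<le> (\<Sum>i\<in>{K..<N}. \<bar>cf_term d i\<bar>) + (\<Sum>i\<in>{K..<N}. \<bar>cf_term e i\<bar>)"
    by (simp add: sum.distrib [symmetric] sum_mono abs_triangle_ineq4)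
  also have "(\<Sum>i\<in>{K..<N}. \<bar>cf_term d i\<bar>) \<le> 3 * (2/3) ^ (K - Suc n)"
    using agree ones \<open>n < K\<close> by (intro cf_term_abs_sum_le[OF d]) auto
  also have "(\<Sum>i\<in>{K..<N}. \<bar>cf_term e i\<bar>) \<le> 3 * (2/3) ^ (K - Suc n)"
    using ones \<open>n < K\<close> by (intro cf_term_abs_sum_le[OF e]) auto
  also have "(\<Sum>i<K. \<bar>cf_term d i - cf_term e i\<bar>) \<le> (A + 1) * K ^ 2 * (2/3) ^ (N - K)"
    by (rule cf_term_dist_sum_head_le[OF assms])
  finally show ?thesis by simp
qed

lemma eventually_mult_power_less:
  fixes r C \<epsilon> :: real
  assumes "\<bar>r\<bar> < 1" "0 < \<epsilon>"
  shows "\<forall>\<^sub>F k in sequentially. C * r ^ k < \<epsilon>"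
  using assms by (intro order_tendstoD(2)[OF tendsto_mult_right_zero[OF LIMSEQ_power_zero]]) auto

lemma digit_le_prefix_sum:
  fixes \<omega> :: "nat \<Rightarrow> nat"
  assumes "\<forall>k>n. \<omega> k = 1"
  shows "real (\<omega> k) \<le> real (\<Sum>i\<le>n. \<omega> i) + 1"
proof (cases "k \<le> n")
  case True
  then have "\<omega> k \<le> (\<Sum>i\<le>n. \<omega> i)" by (intro member_le_sum) auto
  then show ?thesis by linarith
qed (use assms in \<open>simp add: sum_nonneg\<close>)

lemma cf_terms_stable:
  assumes pos: "\<forall>k. \<omega> k > 0" and ones: "\<forall>k>n. \<omega> k = 1" and "\<epsilon> > 0"
  shows "\<exists>m0>0. \<forall>m\<ge>m0. \<forall>\<beta>. (\<forall>k. \<beta> k > 0) \<longrightarrow> (\<forall>k<n + m. \<beta> k = \<omega> k) \<longrightarrow>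
    summable (\<lambda>k. cf_term \<omega> (n + m + k))
    \<and> (\<Sum>k. cf_term \<omega> (n + m + k)) < \<epsilon>
    \<and> (\<Sum>i<n + m. \<bar>cf_term \<beta> i - cf_term \<omega> i\<bar>) < \<epsilon>"
proof -
  define A where "A = real (\<Sum>i\<le>n. \<omega> i) + 1"
  have digits: "\<forall>k. real (\<omega> k) \<le> A"
    unfolding A_def using digit_le_prefix_sum[OF ones] by blast
  obtain k1 where k1: "6 * (2/3) ^ k1 < \<epsilon> / 2"
    using eventually_mult_power_less[of "2/3" "\<epsilon> / 2" 6] \<open>\<epsilon> > 0\<close>
    by (auto simp: eventually_sequentially)
  define K where "K = Suc n + k1"
  obtain k2 where k2: "\<forall>k\<ge>k2. (A + 1) * K ^ 2 * (2/3) ^ k < \<epsilon> / 2"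
    using eventually_mult_power_less[of "2/3" "\<epsilon> / 2"] \<open>\<epsilon> > 0\<close>
    by (auto simp: eventually_sequentially)
  obtain k3 where k3: "\<forall>k\<ge>k3. 3 * (2/3) ^ k < \<epsilon>"
    using eventually_mult_power_less[of "2/3" \<epsilon>] \<open>\<epsilon> > 0\<close>
    by (auto simp: eventually_sequentially)
  show ?thesis
  proof (intro exI[of _ "K + k2 + k3"] conjI allI impI)
    fix m \<beta> assume m: "K + k2 + k3 \<le> m"
      and \<beta>: "\<forall>k. \<beta> k > 0" "\<forall>k<n + m. \<beta> k = \<omega> k"
    from m have "n < n + m" by (simp add: K_def)
    show "summable (\<lambda>k. cf_term \<omega> (n + m + k))"
      by (rule cf_term_tail_le(1)[OF pos ones \<open>n < n + m\<close>])
    have "(\<Sum>k. cf_term \<omega> (n + m + k)) \<le> 3 * (2/3) ^ (n + m - Suc n)"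
      by (rule cf_term_tail_le(2)[OF pos ones \<open>n < n + m\<close>])
    also have "\<dots> < \<epsilon>" using k3 m by (simp add: K_def)
    finally show "(\<Sum>k. cf_term \<omega> (n + m + k)) < \<epsilon>" .
    have "(\<Sum>i<n + m. \<bar>cf_term \<beta> i - cf_term \<omega> i\<bar>)
        \<le> (A + 1) * K ^ 2 * (2/3) ^ (n + m - K) + 6 * (2/3) ^ (K - Suc n)"
      using m by (intro cf_term_dist_sum_le[OF \<beta>(1) pos \<beta>(2) ones digits]) (auto simp: K_def)
    also have "\<dots> < \<epsilon>"
    proof -
      have "k2 \<le> n + m - K" using m by (simp add: K_def)
      with k2 have "(A + 1) * K ^ 2 * (2/3) ^ (n + m - K) < \<epsilon> / 2" by blast
      then show ?thesis using k1 by (simp add: K_def)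
    qed
    finally show "(\<Sum>i<n + m. \<bar>cf_term \<beta> i - cf_term \<omega> i\<bar>) < \<epsilon>" .
  qed (simp add: K_def)
qed

theorem mainTheorem11:
  fixes a :: "nat \<Rightarrow> nat" and n :: nat and \<epsilon> :: real
  assumes apos: "\<forall>i\<le>n. a i > 0"
    and eps: "\<epsilon> > 0"
  shows "\<exists>m0::nat. m0 > 0 \<and>
    (\<forall>m \<ge> m0. \<forall>I :: nat \<Rightarrow> nat. (\<forall>j. I j > 0) \<longrightarrow>
      (let \<omega> = (\<lambda>i. if i \<le> n then a i else 1);
           \<beta> = (\<lambda>i. if i \<le> n then a i else if i < n + m then 1 else I (i - (n + m)))
       in summable (\<lambda>k. cf_term \<omega> (n + m + k))
          \<and> (\<Sum>k. cf_term \<omega> (n + m + k)) < \<epsilon>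
          \<and> (\<Sum>i<n + m. \<bar>cf_term \<beta> i - cf_term \<omega> i\<bar>) < \<epsilon>))"
proof -
  define \<omega> :: "nat \<Rightarrow> nat" where "\<omega> = (\<lambda>i. if i \<le> n then a i else 1)"
  define \<beta> :: "nat \<Rightarrow> (nat \<Rightarrow> nat) \<Rightarrow> nat \<Rightarrow> nat"
    where "\<beta> m I i = (if i \<le> n then a i else if i < n + m then 1 else I (i - (n + m)))" for m I i
  have "\<forall>k. \<omega> k > 0" "\<forall>k>n. \<omega> k = 1" using apos by (simp_all add: \<omega>_def)
  from cf_terms_stable[OF this eps] obtain m0 where "m0 > 0" and stable:
    "\<forall>m\<ge>m0. \<forall>\<beta>. (\<forall>k. \<beta> k > 0) \<longrightarrow> (\<forall>k<n + m. \<beta> k = \<omega> k) \<longrightarrow>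
      summable (\<lambda>k. cf_term \<omega> (n + m + k))
      \<and> (\<Sum>k. cf_term \<omega> (n + m + k)) < \<epsilon>
      \<and> (\<Sum>i<n + m. \<bar>cf_term \<beta> i - cf_term \<omega> i\<bar>) < \<epsilon>"
    by blast
  show ?thesis
    unfolding Let_def \<omega>_def [symmetric] \<beta>_def [symmetric]
    by (intro exI[of _ m0] conjI[OF \<open>m0 > 0\<close>] allI impI stable[rule_format])
      (use apos in \<open>simp_all add: \<beta>_def \<omega>_def\<close>)
qed

end
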